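(* Let $t\in[n]$ and let $S\subseteq N$ be a $t$-switchable set (maximal or not) such that $P^{\langle t\rangle}_S$ is an associated prime of $\mathcal{I}^{\langle t\rangle}$. Then $\tilde{\mathcal{I}}^{\langle t\rangle}_S$ is contained in the $P^{\langle t\rangle}_S$-primary component of $\mathcal{I}^{\langle t\rangle}$ (in any primary decomposition of $\mathcal{I}^{\langle t\rangle}$).
   Context: Fix positive integers $n, r_1,\dots,r_n$, let $N=[r_1]\times\cdots\times[r_n]$, and let $R$ be the polynomial ring over a field in the variables $x_a$, $a\in N$. For $a,b\in N$ and $i\in[n]$, ${\rm s}(i,a,b)\in N$ has $i$-th component $b_i$ and other components equal to those of $a$. Let $d(a,b)=\#\{j: a_j\neq b_j\}$ and $f_{i,a,b}=x_ax_b-x_{{\rm s}(i,a,b)}x_{{\rm s}(i,b,a)}$. Let $\mathcal{I}^{\langle t\rangle}=(f_{i,a,b}: a,b\in N,\ d(a,b)=2,\ i\in[t])$. A subset $S\subseteq N$ is $t$-switchable if for all $a,b\in S$ with $d(a,b)=2$ and all $i\in[t]$, ${\rm s}(i,a,b)\in S$. Elements $a,b\in S$ are connected in $S$ if there are $a_0=a,\dots,a_k=b$ in $S$ with $d(a_{j-1},a_j)\le 1$ for all $j$. For $t$-switchable $S$: $\tilde{\mathcal{I}}^{\langle t\rangle}_S=(f_{i,a,b}: i\in[t],\ a,b \text{ connected in } S)$, $\mathrm{Var}^{\langle t\rangle}_S=(x_a: a\notin S)$, $P^{\langle t\rangle}_S=\mathrm{Var}^{\langle t\rangle}_S+\tilde{\mathcal{I}}^{\langle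 t\rangle}_S$. *)

theory Defs
  imports Main "HOL-Library.Poly_Mapping"
begin

text \<open>Points of N = [r_1] x ... x [r_n] are functions nat => nat, with components
indexed by 1..n, values in 1..r_i, and equal to 0 outside 1..n.\<close>

type_synonym pt = "nat \<Rightarrow> nat"

type_synonym 'k mpoly = "(pt \<Rightarrow>\<^sub>0 nat) \<Rightarrow>\<^sub>0 'k"

definition gridN :: "nat \<Rightarrow> (nat \<Rightarrow> nat) \<Rightarrow> pt set" where
  "gridN n r = {a. (\<forall>i\<in>{1..n}. 1 \<le> a i \<and> a i \<le> r i) \<and> (\<forall>i. i \<notin> {1..n} \<longrightarrow> a i = 0)}"

text \<open>The polynomial ring R = k[x_a : a in N], as the subset of polynomials
involving only variables from N.\<close>
definition polyR :: "pt set \<Rightarrow> ('k::field) mpoly set" where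
  "polyR N = {p. \<forall>m\<in>Poly_Mapping.keys p. Poly_Mapping.keys m \<subseteq> N}"

definition var :: "pt \<Rightarrow> ('k::field) mpoly" where
  "var a = Poly_Mapping.single (Poly_Mapping.single a 1) 1"

definition sw :: "nat \<Rightarrow> pt \<Rightarrow> pt \<Rightarrow> pt" where
  "sw i a b = a(i := b i)"

definition dist :: "nat \<Rightarrow> pt \<Rightarrow> pt \<Rightarrow> nat" where
  "dist n a b = card {j\<in>{1..n}. a j \<noteq> b j}"

definition fpol :: "nat \<Rightarrow> pt \<Rightarrow> pt \<Rightarrow> ('k::field) mpoly" where
  "fpol i a b = var a * var b - var (sw i a b) * var (sw i b a)"

definition is_ideal :: "('a::comm_ring_1) set \<Rightarrow> 'a set \<Rightarrow> bool" where
  "is_ideal C I \<longleftrightarrow> I \<subseteq> C \<and> 0 \<in> I \<and> (\<forall>x\<in>I. \<forall>y\<in>I. x + y \<in> I)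
     \<and> (\<forall>c\<in>C. \<forall>x\<in>I. c * x \<in> I)"

definition gen_ideal :: "('a::comm_ring_1) set \<Rightarrow> 'a set \<Rightarrow> 'a set" where
  "gen_ideal C G = \<Inter>{I. is_ideal C I \<and> G \<subseteq> I}"

definition ideal_sum :: "('a::comm_ring_1) set \<Rightarrow> 'a set \<Rightarrow> 'a set \<Rightarrow> 'a set" where
  "ideal_sum C I J = gen_ideal C (I \<union> J)"

definition is_prime_ideal :: "('a::comm_ring_1) set \<Rightarrow> 'a set \<Rightarrow> bool" where
  "is_prime_ideal C P \<longleftrightarrow> is_ideal C P \<and> P \<noteq> C \<and>
     (\<forall>a\<in>C. \<forall>b\<in>C. a * b \<in> P \<longrightarrow> a \<in> P \<or> b \<in> P)"

definition is_primary_ideal :: "('a::comm_ring_1) set \<Rightarrow> 'a set \<Rightarrow> bool" where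
  "is_primary_ideal C Q \<longleftrightarrow> is_ideal C Q \<and> Q \<noteq> C \<and>
     (\<forall>a\<in>C. \<forall>b\<in>C. a * b \<in> Q \<longrightarrow> a \<notin> Q \<longrightarrow> (\<exists>k. b ^ k \<in> Q))"

definition radical :: "('a::comm_ring_1) set \<Rightarrow> 'a set \<Rightarrow> 'a set" where
  "radical C I = {f\<in>C. \<exists>k. f ^ k \<in> I}"

definition associated_prime :: "('a::comm_ring_1) set \<Rightarrow> 'a set \<Rightarrow> 'a set \<Rightarrow> bool" where
  "associated_prime C I P \<longleftrightarrow> is_prime_ideal C P \<and> (\<exists>f\<in>C. P = {g\<in>C. g * f \<in> I})"

definition primary_decomposition :: "('a::comm_ring_1) set \<Rightarrow> 'a set \<Rightarrow> 'a set set \<Rightarrow> bool" where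
  "primary_decomposition C I Qs \<longleftrightarrow> finite Qs \<and> Qs \<noteq> {} \<and>
     (\<forall>Q\<in>Qs. is_primary_ideal C Q) \<and> \<Inter>Qs = I \<and>
     (\<forall>Q\<in>Qs. \<forall>Q'\<in>Qs. radical C Q = radical C Q' \<longrightarrow> Q = Q') \<and>
     (\<forall>Q\<in>Qs. \<Inter>(Qs - {Q}) \<noteq> I)"

definition It :: "nat \<Rightarrow> (nat \<Rightarrow> nat) \<Rightarrow> nat \<Rightarrow> ('k::field) mpoly set" where
  "It n r t = gen_ideal (polyR (gridN n r))
     {fpol i a b | i a b. a \<in> gridN n r \<and> b \<in> gridN n r \<and> dist n a b = 2 \<and> i \<in> {1..t}}"

definition switchable :: "nat \<Rightarrow> (nat \<Rightarrow> nat) \<Rightarrow> nat \<Rightarrow> pt set \<Rightarrow> bool" where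
  "switchable n r t S \<longleftrightarrow> S \<subseteq> gridN n r \<and>
     (\<forall>a\<in>S. \<forall>b\<in>S. \<forall>i\<in>{1..t}. dist n a b = 2 \<longrightarrow> sw i a b \<in> S)"

definition connected_in :: "nat \<Rightarrow> pt set \<Rightarrow> pt \<Rightarrow> pt \<Rightarrow> bool" where
  "connected_in n S a b \<longleftrightarrow> a \<in> S \<and>
     (\<lambda>u v. u \<in> S \<and> v \<in> S \<and> dist n u v \<le> 1)\<^sup>*\<^sup>* a b"

definition Itilde :: "nat \<Rightarrow> (nat \<Rightarrow> nat) \<Rightarrow> nat \<Rightarrow> pt set \<Rightarrow> ('k::field) mpoly set" where
  "Itilde n r t S = gen_ideal (polyR (gridN n r))
     {fpol i a b | i a b. i \<in> {1..t} \<and> connected_in n S a b}"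

definition VarS :: "nat \<Rightarrow> (nat \<Rightarrow> nat) \<Rightarrow> pt set \<Rightarrow> ('k::field) mpoly set" where
  "VarS n r S = gen_ideal (polyR (gridN n r)) {var a | a. a \<in> gridN n r \<and> a \<notin> S}"

definition PS :: "nat \<Rightarrow> (nat \<Rightarrow> nat) \<Rightarrow> nat \<Rightarrow> pt set \<Rightarrow> ('k::field) mpoly set" where
  "PS n r t S = ideal_sum (polyR (gridN n r)) (VarS n r S) (Itilde n r t S)"

end

theory Submission imports Defs begin

text \<open>Setting every variable x_a to the indicator of a \<in> S is a ring homomorphism that
kills P_S but not x_c for c \<in> S. So if Q is primary with radical P_S, every x_c with c \<in> S
is a non-zerodivisor modulo Q. Now let a, b be connected in S and i \<le> t. As S is
switchable, a path from a to b projects to a path inside S \<inter> {c. c_i = a_i} ending at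
b(i := a_i), where f_{i,-,b} vanishes. For a step from a to a neighbour a' \<in> S with a'_i = a_i,
  x_a' f_{i,a,b} = x_a f_{i,a',b} + x_{b(i := a_i)} f_{i,a,a'(i := b_i)},
and the last binomial lies in I^<t> because a and a'(i := b_i) are at distance 2;
cancelling x_a' carries the membership f_{i,-,b} \<in> Q back along the path to a.\<close>

lemma ideal_add: "is_ideal C Q \<Longrightarrow> x \<in> Q \<Longrightarrow> y \<in> Q \<Longrightarrow> x + y \<in> Q"
  by (simp add: is_ideal_def)

lemma ideal_mult: "is_ideal C Q \<Longrightarrow> c \<in> C \<Longrightarrow> x \<in> Q \<Longrightarrow> c * x \<in> Q"
  by (simp add: is_ideal_def)

lemma ideal_zero: "is_ideal C Q \<Longrightarrow> 0 \<in> Q"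
  by (simp add: is_ideal_def)

lemma gen_ideal_least: "is_ideal C J \<Longrightarrow> G \<subseteq> J \<Longrightarrow> gen_ideal C G \<subseteq> J"
  unfolding gen_ideal_def by blast

lemma gen_ideal_gen: "G \<subseteq> gen_ideal C G"
  unfolding gen_ideal_def by blast

definition nonzerodivisor_mod :: "('a::comm_ring_1) set \<Rightarrow> 'a set \<Rightarrow> 'a \<Rightarrow> bool" where
  "nonzerodivisor_mod C Q x \<longleftrightarrow> (\<forall>g\<in>C. x * g \<in> Q \<longrightarrow> g \<in> Q)"

lemma primary_nonzerodivisor_mod:
  assumes Q: "is_primary_ideal C Q" and x: "x \<in> C" "x \<notin> radical C Q"
  shows "nonzerodivisor_mod C Q x"
  unfolding nonzerodivisor_mod_def
proof (intro ballI impI)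
  fix g assume g: "g \<in> C" and "x * g \<in> Q"
  then have "g * x \<in> Q" by (simp add: mult.commute)
  show "g \<in> Q"
  proof (rule ccontr)
    assume "g \<notin> Q"
    then obtain k where "x ^ k \<in> Q"
      using Q g x(1) \<open>g * x \<in> Q\<close> unfolding is_primary_ideal_def by blast
    then show False using x by (auto simp: radical_def)
  qed
qed

lemma keys_add_nat:
  "Poly_Mapping.keys (m1 + m2 :: 'a \<Rightarrow>\<^sub>0 nat) = Poly_Mapping.keys m1 \<union> Poly_Mapping.keys m2"
  by (auto simp: in_keys_iff lookup_add)

lemma update_eq_add_single:
  "a \<notin> Poly_Mapping.keys f \<Longrightarrow> Poly_Mapping.update a b f = f + Poly_Mapping.single a b"
  by (intro poly_mapping_eqI) (auto simp: lookup_update lookup_add lookup_single in_keys_iff)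

lemma polyR_var: "a \<in> N \<Longrightarrow> (var a :: 'k::field mpoly) \<in> polyR N"
  by (simp add: polyR_def var_def)

lemma polyR_mult: "p \<in> polyR N \<Longrightarrow> q \<in> polyR N \<Longrightarrow> p * q \<in> polyR N"
  unfolding polyR_def
proof safe
  fix m x assume p: "\<forall>m\<in>Poly_Mapping.keys p. Poly_Mapping.keys m \<subseteq> N"
    and q: "\<forall>m\<in>Poly_Mapping.keys q. Poly_Mapping.keys m \<subseteq> N"
    and m: "m \<in> Poly_Mapping.keys (p * q)" and x: "x \<in> Poly_Mapping.keys m"
  obtain m1 m2 where "m = m1 + m2" "m1 \<in> Poly_Mapping.keys p" "m2 \<in> Poly_Mapping.keys q"
    using keys_mult[of p q] m by blast
  then show "x \<in> N" using p q x keys_add_nat[of m1 m2] by auto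
qed

lemma polyR_add: "p \<in> polyR N \<Longrightarrow> q \<in> polyR N \<Longrightarrow> p + q \<in> polyR N"
  unfolding polyR_def using keys_add[of p q] by blast

lemma polyR_diff: "p \<in> polyR N \<Longrightarrow> q \<in> polyR N \<Longrightarrow> p - q \<in> polyR N"
  unfolding polyR_def using keys_diff[of p q] by blast

text \<open>The value of a polynomial at the point x_a = (if a \<in> S then 1 else 0).\<close>

definition eval_indicator :: "pt set \<Rightarrow> ('k::field) mpoly \<Rightarrow> 'k" where
  "eval_indicator S g = (\<Sum>m\<in>Poly_Mapping.keys g.
     if Poly_Mapping.keys m \<subseteq> S then Poly_Mapping.lookup g m else 0)"

lemma eval_indicator_superset:
  assumes "finite A" "Poly_Mapping.keys g \<subseteq> A"
  shows "eval_indicator S g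
    = (\<Sum>m\<in>A. if Poly_Mapping.keys m \<subseteq> S then Poly_Mapping.lookup g m else 0)"
  unfolding eval_indicator_def
  by (rule sum.mono_neutral_left) (use assms in \<open>auto simp: in_keys_iff\<close>)

lemma eval_indicator_zero [simp]: "eval_indicator S 0 = 0"
  by (simp add: eval_indicator_def)

lemma eval_indicator_single:
  "eval_indicator S (Poly_Mapping.single m c) = (if Poly_Mapping.keys m \<subseteq> S then c else 0)"
  by (simp add: eval_indicator_def)

lemma eval_indicator_var: "eval_indicator S (var a :: 'k::field mpoly) = (if a \<in> S then 1 else 0)"
  by (simp add: var_def eval_indicator_single)

lemma eval_indicator_add: "eval_indicator S (g + h) = eval_indicator S g + eval_indicator S h"
proof -
  let ?A = "Poly_Mapping.keys g \<union> Poly_Mapping.keys h"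
  let ?e = "\<lambda>p m. if Poly_Mapping.keys m \<subseteq> S then Poly_Mapping.lookup p m else 0"
  have "eval_indicator S (g + h) = (\<Sum>m\<in>?A. ?e (g + h) m)"
    by (rule eval_indicator_superset) (use keys_add[of g h] in auto)
  also have "\<dots> = (\<Sum>m\<in>?A. ?e g m) + (\<Sum>m\<in>?A. ?e h m)"
    by (simp add: lookup_add sum.distrib[symmetric] if_distrib cong: if_cong)
  also have "\<dots> = eval_indicator S g + eval_indicator S h"
    by (simp add: eval_indicator_superset[of ?A g] eval_indicator_superset[of ?A h])
  finally show ?thesis .
qed

lemma eval_indicator_diff: "eval_indicator S (g - h) = eval_indicator S g - eval_indicator S h"
  using eval_indicator_add[of S "g - h" h] by simp

lemma eval_indicator_mult_single:
  "eval_indicator S (Poly_Mapping.single m c * h)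
    = eval_indicator S (Poly_Mapping.single m c) * eval_indicator S h"
proof (induction h rule: update_induct)
  case const then show ?case by simp
next
  case (update f a b)
  then show ?case
    by (simp add: update_eq_add_single distrib_left mult_single eval_indicator_add
        eval_indicator_single keys_add_nat)
qed

lemma eval_indicator_mult: "eval_indicator S (g * h) = eval_indicator S g * eval_indicator S h"
proof (induction g rule: update_induct)
  case const then show ?case by simp
next
  case (update f a b)
  then show ?case
    by (simp add: update_eq_add_single distrib_right eval_indicator_add eval_indicator_mult_single)
qed

lemma is_ideal_eval_indicator_kernel:
  "is_ideal (polyR N) {g \<in> polyR N. eval_indicator S (g :: 'k::field mpoly) = 0}"
  unfolding is_ideal_def
  by (auto simp: polyR_add polyR_mult eval_indicator_add eval_indicator_mult)
     (simp add: polyR_def)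

lemma grid_upd: "a \<in> gridN n r \<Longrightarrow> b \<in> gridN n r \<Longrightarrow> i \<in> {1..n} \<Longrightarrow> a(i := b i) \<in> gridN n r"
  by (auto simp: gridN_def)

lemma grid_outside: "a \<in> gridN n r \<Longrightarrow> k \<notin> {1..n} \<Longrightarrow> a k = 0"
  by (auto simp: gridN_def)

lemma fpol_polyR:
  "a \<in> gridN n r \<Longrightarrow> b \<in> gridN n r \<Longrightarrow> i \<in> {1..n}
    \<Longrightarrow> (fpol i a b :: 'k::field mpoly) \<in> polyR (gridN n r)"
  unfolding fpol_def sw_def
  by (intro polyR_diff polyR_mult polyR_var; (assumption | rule grid_upd; assumption))

lemma fpol_same_coord: "a i = b i \<Longrightarrow> (fpol i a b :: 'k::field mpoly) = 0"
  by (simp add: fpol_def sw_def fun_upd_idem mult.commute)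

lemma fpol_upd_self: "(fpol i a (a(i := v)) :: 'k::field mpoly) = 0"
  by (simp add: fpol_def sw_def mult.commute)

lemma fpol_in_It:
  "a \<in> gridN n r \<Longrightarrow> b \<in> gridN n r \<Longrightarrow> dist n a b = 2 \<Longrightarrow> i \<in> {1..t}
    \<Longrightarrow> fpol i a b \<in> It n r t"
  unfolding It_def by (rule subsetD[OF gen_ideal_gen]) blast

lemma dist_sym: "dist n a b = dist n b a"
  unfolding dist_def by metis

lemma dist_le_1_eq_upd:
  assumes "a \<in> gridN n r" "a' \<in> gridN n r" "dist n a a' \<le> 1" "a i \<noteq> a' i" "i \<in> {1..n}"
  shows "a' = a(i := a' i)"
proof
  fix k show "a' k = (a(i := a' i)) k"
  proof (rule ccontr)
    assume ne: "a' k \<noteq> (a(i := a' i)) k"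
    then have "k \<noteq> i" "a k \<noteq> a' k" by (cases "k = i"; simp)+
    moreover have "k \<in> {1..n}"
      using \<open>a k \<noteq> a' k\<close> grid_outside[OF assms(1)] grid_outside[OF assms(2)] by metis
    ultimately have "{i, k} \<subseteq> {j\<in>{1..n}. a j \<noteq> a' j}" using assms by auto
    then have "card {i, k} \<le> dist n a a'" unfolding dist_def by (intro card_mono) auto
    then show False using \<open>k \<noteq> i\<close> assms(3) by simp
  qed
qed

lemma dist_upd_eq_2:
  assumes "a \<in> gridN n r" "a' \<in> gridN n r" "a \<noteq> a'" "dist n a a' \<le> 1"
    and "a' i = a i" "i \<in> {1..n}" "v \<noteq> a i"
  shows "dist n a (a'(i := v)) = 2"
proof -
  let ?D = "{j\<in>{1..n}. a j \<noteq> a' j}"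
  obtain k where k: "a k \<noteq> a' k" using assms(3) by blast
  then have "k \<in> {1..n}" using grid_outside[OF assms(1)] grid_outside[OF assms(2)] by metis
  then have "?D \<noteq> {}" using k by blast
  moreover have "card ?D \<le> 1" using assms(4) unfolding dist_def .
  moreover have "finite ?D" by simp
  ultimately have "card ?D = 1" by (metis card_0_eq le_antisym less_one not_le)
  moreover have "{j\<in>{1..n}. a j \<noteq> (a'(i := v)) j} = insert i ?D"
    using assms(5-7) by auto
  moreover have "i \<notin> ?D" using assms(5) by auto
  ultimately show ?thesis unfolding dist_def by simp
qed

definition adjacent :: "nat \<Rightarrow> pt set \<Rightarrow> pt \<Rightarrow> pt \<Rightarrow> bool" where
  "adjacent n S u v \<longleftrightarrow> u \<in> S \<and> v \<in> S \<and> dist n u v \<le> 1"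

lemma connected_in_iff: "connected_in n S a b \<longleftrightarrow> a \<in> S \<and> (adjacent n S)\<^sup>*\<^sup>* a b"
proof -
  have "adjacent n S = (\<lambda>u v. u \<in> S \<and> v \<in> S \<and> dist n u v \<le> 1)"
    by (auto simp: adjacent_def fun_eq_iff)
  then show ?thesis by (simp add: connected_in_def)
qed

lemma adjacent_rtranclp_sym: "(adjacent n S)\<^sup>*\<^sup>* a b \<Longrightarrow> (adjacent n S)\<^sup>*\<^sup>* b a"
proof (induction rule: rtranclp_induct)
  case (step y z)
  then have "adjacent n S z y" by (auto simp: adjacent_def dist_sym)
  with step.IH show ?case by (meson converse_rtranclp_into_rtranclp)
qed simp

lemma adjacent_rtranclp_in: "(adjacent n S)\<^sup>*\<^sup>* a b \<Longrightarrow> a \<in> S \<Longrightarrow> b \<in> S"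
  by (induction rule: rtranclp_induct) (auto simp: adjacent_def)

lemma switchable_connected_upd_in:
  assumes sw: "switchable n r t S" and t: "t \<le> n" and i: "i \<in> {1..t}"
    and path: "(adjacent n S)\<^sup>*\<^sup>* a b" and aS: "a \<in> S"
  shows "a(i := b i) \<in> S"
  using path aS
proof (induction rule: converse_rtranclp_induct)
  case base then show ?case by simp
next
  case (step a a')
  have SN: "S \<subseteq> gridN n r" using sw by (simp add: switchable_def)
  have a'S: "a' \<in> S" and d: "dist n a a' \<le> 1" and aS: "a \<in> S"
    using step(1) by (auto simp: adjacent_def)
  have IH: "a'(i := b i) \<in> S" using step.IH a'S .
  have iN: "i \<in> {1..n}" using i t by auto
  consider "a i = b i" | "a' i \<noteq> a i" | "a = a'" | "a i \<noteq> b i" "a' i = a i" "a \<noteq> a'"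
    by blast
  then show ?case
  proof cases
    case 1 then show ?thesis using aS by (simp add: fun_upd_idem)
  next
    case 2
    then have "a' = a(i := a' i)" using dist_le_1_eq_upd[of a n r a' i] SN aS a'S d iN by auto
    then have "a(i := b i) = a'(i := b i)" by (metis fun_upd_upd)
    then show ?thesis using IH by (simp only:)
  next
    case 3 then show ?thesis using IH by (simp only:)
  next
    case 4
    then have "dist n a (a'(i := b i)) = 2"
      using dist_upd_eq_2[of a n r a' i "b i"] SN aS a'S d iN by auto
    then have "sw i a (a'(i := b i)) \<in> S" using sw aS IH i by (auto simp: switchable_def)
    then show ?thesis by (simp add: sw_def fun_upd_def)
  qed
qed

definition slice_adjacent :: "nat \<Rightarrow> pt set \<Rightarrow> nat \<Rightarrow> pt \<Rightarrow> pt \<Rightarrow> bool" where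
  "slice_adjacent n S i u v \<longleftrightarrow> adjacent n S u v \<and> u i = v i"

lemma connected_project_to_slice:
  assumes sw: "switchable n r t S" and t: "t \<le> n" and i: "i \<in> {1..t}"
    and path: "(adjacent n S)\<^sup>*\<^sup>* a c" and aS: "a \<in> S"
  shows "(slice_adjacent n S i)\<^sup>*\<^sup>* a (c(i := a i))"
  using path
proof (induction rule: rtranclp_induct)
  case base then show ?case by simp
next
  case (step c d)
  have cS: "c \<in> S" and dS: "d \<in> S" and cd: "dist n c d \<le> 1"
    using step(2) by (auto simp: adjacent_def)
  have "(adjacent n S)\<^sup>*\<^sup>* c a" "(adjacent n S)\<^sup>*\<^sup>* d a"
    using step(1,2) by (auto intro: adjacent_rtranclp_sym rtranclp.rtrancl_into_rtrancl)
  then have "c(i := a i) \<in> S" "d(i := a i) \<in> S"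
    using switchable_connected_upd_in[OF sw t i] cS dS by auto
  moreover have "dist n (c(i := a i)) (d(i := a i)) \<le> dist n c d"
    unfolding dist_def by (rule card_mono) auto
  ultimately have "slice_adjacent n S i (c(i := a i)) (d(i := a i))"
    using cd by (auto simp: slice_adjacent_def adjacent_def)
  with step.IH show ?case by (meson rtranclp.rtrancl_into_rtrancl)
qed

lemma fpol_mem_adjacent_step:
  fixes Q :: "'k::field mpoly set"
  assumes Q: "is_ideal (polyR (gridN n r)) Q" and IQ: "It n r t \<subseteq> Q"
    and nzd: "nonzerodivisor_mod (polyR (gridN n r)) Q (var a')"
    and t: "t \<le> n" and i: "i \<in> {1..t}"
    and a: "a \<in> gridN n r" and a': "a' \<in> gridN n r" and b: "b \<in> gridN n r"
    and d: "dist n a a' \<le> 1" and ai: "a' i = a i" and f': "fpol i a' b \<in> Q"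
  shows "fpol i a b \<in> Q"
proof -
  have iN: "i \<in> {1..n}" using i t by auto
  consider "a = a'" | "a i = b i" | "a \<noteq> a'" "a i \<noteq> b i" by blast
  then show ?thesis
  proof cases
    case 1 then show ?thesis using f' by simp
  next
    case 2 then show ?thesis using ideal_zero[OF Q] by (simp add: fpol_same_coord)
  next
    case 3
    let ?p = "a'(i := b i)" and ?q = "b(i := a i)"
    have "?p \<in> gridN n r" "?q \<in> gridN n r" using grid_upd a a' b iN by auto
    moreover have "dist n a ?p = 2" using dist_upd_eq_2[of a n r a' i "b i"] a a' 3 d ai iN by auto
    ultimately have fp: "fpol i a ?p \<in> Q" using fpol_in_It[OF a _ _ i] IQ by blast
    have "b(i := a' i) = ?q" "?p(i := a i) = a'" "a(i := ?p i) = a(i := b i)"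
      using ai by auto
    then have "var a' * fpol i a b = var a * fpol i a' b + var ?q * fpol i a ?p"
      unfolding fpol_def sw_def by (simp add: algebra_simps)
    also have "\<dots> \<in> Q"
      by (intro ideal_add[OF Q] ideal_mult[OF Q] polyR_var f' fp a \<open>?q \<in> gridN n r\<close>)
    finally show ?thesis using nzd fpol_polyR[OF a b iN] unfolding nonzerodivisor_mod_def by blast
  qed
qed

lemma fpol_mem_along_slice:
  fixes Q :: "'k::field mpoly set"
  assumes Q: "is_ideal (polyR (gridN n r)) Q" and IQ: "It n r t \<subseteq> Q"
    and nzd: "\<forall>c\<in>S. nonzerodivisor_mod (polyR (gridN n r)) Q (var c)"
    and SN: "S \<subseteq> gridN n r" and t: "t \<le> n" and i: "i \<in> {1..t}"
    and b: "b \<in> gridN n r" and qb: "q(i := b i) = b"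
    and path: "(slice_adjacent n S i)\<^sup>*\<^sup>* c q"
  shows "fpol i c b \<in> Q"
  using path
proof (induction rule: converse_rtranclp_induct)
  case base
  have "fpol i q b = 0" using fpol_upd_self[of i q "b i"] qb by simp
  then show ?case using ideal_zero[OF Q] by metis
next
  case (step c c')
  then have "c \<in> S" "c' \<in> S" "dist n c c' \<le> 1" "c' i = c i"
    by (auto simp: slice_adjacent_def adjacent_def)
  with step.IH show ?case
    using fpol_mem_adjacent_step[OF Q IQ _ t i _ _ b] nzd SN by auto
qed

lemma fpol_connected_mem:
  fixes Q :: "'k::field mpoly set"
  assumes Q: "is_ideal (polyR (gridN n r)) Q" and IQ: "It n r t \<subseteq> Q"
    and nzd: "\<forall>c\<in>S. nonzerodivisor_mod (polyR (gridN n r)) Q (var c)"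
    and sw: "switchable n r t S" and t: "t \<le> n" and i: "i \<in> {1..t}"
    and con: "connected_in n S a b"
  shows "fpol i a b \<in> Q"
proof -
  have SN: "S \<subseteq> gridN n r" using sw by (simp add: switchable_def)
  have aS: "a \<in> S" and path: "(adjacent n S)\<^sup>*\<^sup>* a b" using con by (auto simp: connected_in_iff)
  then have "b \<in> gridN n r" using adjacent_rtranclp_in SN by blast
  then show ?thesis
    by (rule fpol_mem_along_slice[OF Q IQ nzd SN t i _ _ connected_project_to_slice[OF sw t i path aS]])
      simp
qed

lemma var_notin_PS:
  assumes sw: "switchable n r t S" and t: "t \<le> n" and cS: "c \<in> S"
  shows "(var c :: 'k::field mpoly) \<notin> PS n r t S"
proof -
  let ?C = "polyR (gridN n r) :: 'k mpoly set"
  let ?Z = "{g \<in> ?C. eval_indicator S g = 0}"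
  have Z: "is_ideal ?C ?Z" by (rule is_ideal_eval_indicator_kernel)
  have SN: "S \<subseteq> gridN n r" using sw by (simp add: switchable_def)
  have "VarS n r S \<subseteq> ?Z"
    unfolding VarS_def by (rule gen_ideal_least[OF Z]) (auto simp: eval_indicator_var polyR_var)
  moreover have "Itilde n r t S \<subseteq> ?Z"
    unfolding Itilde_def
  proof (rule gen_ideal_least[OF Z], safe)
    fix i a b assume i: "i \<in> {1..t}" and con: "connected_in n S a b"
    then have aS: "a \<in> S" and path: "(adjacent n S)\<^sup>*\<^sup>* a b" by (auto simp: connected_in_iff)
    have bS: "b \<in> S" using adjacent_rtranclp_in[OF path aS] .
    have "a(i := b i) \<in> S" "b(i := a i) \<in> S"
      using switchable_connected_upd_in[OF sw t i] path adjacent_rtranclp_sym aS bS by auto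
    then show "eval_indicator S (fpol i a b :: 'k mpoly) = 0"
      using aS bS by (simp add: fpol_def sw_def eval_indicator_diff eval_indicator_mult eval_indicator_var)
    show "fpol i a b \<in> ?C" using fpol_polyR[of a n r b i] aS bS SN i t by auto
  qed
  ultimately have "PS n r t S \<subseteq> ?Z"
    unfolding PS_def ideal_sum_def by (intro gen_ideal_least[OF Z]) auto
  moreover have "eval_indicator S (var c :: 'k mpoly) \<noteq> 0" using cS by (simp add: eval_indicator_var)
  ultimately show ?thesis by blast
qed

theorem corollary4p14:
  fixes n t :: nat and r :: "nat \<Rightarrow> nat" and S :: "pt set"
    and Qs :: "('k::field) mpoly set set"
  assumes "n \<ge> 1" and "\<forall>i\<in>{1..n}. r i \<ge> 1"
    and "t \<in> {1..n}"
    and "switchable n r t S"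
    and "associated_prime (polyR (gridN n r)) (It n r t) (PS n r t S :: 'k mpoly set)"
    and "primary_decomposition (polyR (gridN n r)) (It n r t) Qs"
  shows "\<forall>Q\<in>Qs. radical (polyR (gridN n r)) Q = PS n r t S \<longrightarrow> Itilde n r t S \<subseteq> Q"
proof (intro ballI impI)
  fix Q assume "Q \<in> Qs" and rad: "radical (polyR (gridN n r)) Q = PS n r t S"
  have t: "t \<le> n" using assms(3) by simp
  have SN: "S \<subseteq> gridN n r" using assms(4) by (simp add: switchable_def)
  have prim: "is_primary_ideal (polyR (gridN n r)) Q" and IQ: "It n r t \<subseteq> Q"
    using assms(6) \<open>Q \<in> Qs\<close> by (auto simp: primary_decomposition_def)
  then have Q: "is_ideal (polyR (gridN n r)) Q" by (simp add: is_primary_ideal_def)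
  have nzd: "\<forall>c\<in>S. nonzerodivisor_mod (polyR (gridN n r)) Q (var c)"
    using primary_nonzerodivisor_mod[OF prim] polyR_var SN var_notin_PS[OF assms(4) t] rad
    by blast
  show "Itilde n r t S \<subseteq> Q"
    unfolding Itilde_def
    by (rule gen_ideal_least[OF Q]) (auto intro: fpol_connected_mem[OF Q IQ nzd assms(4) t])
qed

end
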